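(* Let $H$ be a Hermitian operator on a $d$-dimensional Hilbert space with spectral decomposition $H=\sum_{i=1}^M\lambda_i\Pi_i$, where $M\ge 2$, $\lambda_M>\cdots>\lambda_1$ are the distinct eigenvalues and $\Pi_i$ the spectral projections ($\Pi_i\Pi_j=\delta_{ij}\Pi_i$, $\sum_i\Pi_i=I$). Let $\Delta=\lambda_2-\lambda_1$ and $d_G=\operatorname{Tr}[\Pi_1]$, and write $\gamma=\frac{\Pi_1}{\operatorname{Tr}[\Pi_1]}$, $\tau_\beta=\frac{e^{-\beta H}}{\operatorname{Tr}[e^{-\beta H}]}$. Then for every $\beta\ge 0$, $$D(\gamma\|\tau_\beta)=\ln\!\left(1+\frac{\sum_{i=2}^Me^{-\beta(\lambda_i-\lambda_1)}\operatorname{Tr}[\Pi_i]}{d_G}\right)\le\ln\!\left(1+e^{-\beta\Delta}\left(\frac{d-d_G}{d_G}\right)\right),$$ and moreover, for all $\alpha\in(0,1)\cup(1,\infty)$, $$D(\gamma\|\tau_\beta)=D_\alpha(\gamma\|\tau_\beta)=\widetilde{D}_\alpha(\gamma\|\tau_\beta)=\widehat{D}_\alpha(\gamma\|\tau_\beta).$$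
   Context: For states $\rho,\sigma$: the quantum relative entropy is $D(\rho\|\sigma)=\operatorname{Tr}[\rho(\ln\rho-\ln\sigma)]$; the Petz–Rényi relative entropy is $D_\alpha(\rho\|\sigma)=\frac{1}{\alpha-1}\ln\operatorname{Tr}[\rho^\alpha\sigma^{1-\alpha}]$; the sandwiched Rényi relative entropy is $\widetilde{D}_\alpha(\rho\|\sigma)=\frac{1}{\alpha-1}\ln\operatorname{Tr}\!\left[\left(\sigma^{\frac{1-\alpha}{2\alpha}}\rho\,\sigma^{\frac{1-\alpha}{2\alpha}}\right)^\alpha\right]$; the geometric Rényi relative entropy is $\widehat{D}_\alpha(\rho\|\sigma)=\frac{1}{\alpha-1}\ln\operatorname{Tr}\!\left[\sigma\left(\sigma^{-1/2}\rho\,\sigma^{-1/2}\right)^\alpha\right]$ (here $\sigma$ is full rank). *)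

theory Defs
  imports "HOL-Analysis.Analysis"
begin

text \<open>Complex d x d matrices are modelled as complex^'n^'n with d = CARD('n).\<close>

definition cadj :: "complex^'n^'n \<Rightarrow> complex^'n^'n" where
  "cadj A = (\<chi> i j. cnj (A $ j $ i))"

definition hermitian :: "complex^'n^'n \<Rightarrow> bool" where
  "hermitian A \<longleftrightarrow> cadj A = A"

definition unitary :: "complex^'n^'n \<Rightarrow> bool" where
  "unitary U \<longleftrightarrow> U ** cadj U = mat 1 \<and> cadj U ** U = mat 1"

definition rdiag :: "('n \<Rightarrow> real) \<Rightarrow> complex^'n^'n" where
  "rdiag d = (\<chi> i j. if i = j then complex_of_real (d i) else 0)"

definition mfun :: "(real \<Rightarrow> real) \<Rightarrow> complex^'n^'n \<Rightarrow> complex^'n^'n" where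
  "mfun f A = (SOME B. \<exists>U d. unitary U \<and> A = U ** rdiag d ** cadj U
                         \<and> B = U ** rdiag (\<lambda>i. f (d i)) ** cadj U)"

text \<open>Logarithm on the support (convention 0 ln 0 = 0), real powers (0 powr a = 0).\<close>
definition mln :: "complex^'n^'n \<Rightarrow> complex^'n^'n" where
  "mln A = mfun (\<lambda>x. if x > 0 then ln x else 0) A"

definition mpow :: "complex^'n^'n \<Rightarrow> real \<Rightarrow> complex^'n^'n" where
  "mpow A a = mfun (\<lambda>x. x powr a) A"

definition mexp :: "complex^'n^'n \<Rightarrow> complex^'n^'n" where
  "mexp A = mfun exp A"

definition rel_ent :: "complex^'n^'n \<Rightarrow> complex^'n^'n \<Rightarrow> real" where
  "rel_ent \<rho> \<sigma> = Re (trace (\<rho> ** (mln \<rho> - mln \<sigma>)))"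

definition petz_renyi :: "real \<Rightarrow> complex^'n^'n \<Rightarrow> complex^'n^'n \<Rightarrow> real" where
  "petz_renyi \<alpha> \<rho> \<sigma> = 1 / (\<alpha> - 1) * ln (Re (trace (mpow \<rho> \<alpha> ** mpow \<sigma> (1 - \<alpha>))))"

definition sandwiched_renyi :: "real \<Rightarrow> complex^'n^'n \<Rightarrow> complex^'n^'n \<Rightarrow> real" where
  "sandwiched_renyi \<alpha> \<rho> \<sigma> = 1 / (\<alpha> - 1) * ln (Re (trace (mpow
     (mpow \<sigma> ((1 - \<alpha>) / (2 * \<alpha>)) ** \<rho> ** mpow \<sigma> ((1 - \<alpha>) / (2 * \<alpha>))) \<alpha>)))"

definition geometric_renyi :: "real \<Rightarrow> complex^'n^'n \<Rightarrow> complex^'n^'n \<Rightarrow> real" where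
  "geometric_renyi \<alpha> \<rho> \<sigma> = 1 / (\<alpha> - 1) * ln (Re (trace (\<sigma> ** mpow
     (mpow \<sigma> (-1/2) ** \<rho> ** mpow \<sigma> (-1/2)) \<alpha>)))"

end

theory Submission
  imports Defs
begin

(*
  H, \<gamma> and \<tau>\<^sub>\<beta>, and every matrix function of them, are real combinations \<Sum>\<^sub>i c\<^sub>i \<Pi>\<^sub>i of the
  spectral projections.  One unitary diagonalises all \<Pi>\<^sub>i at once (an orthonormal basis adapted
  to their ranges), so on such combinations matrix functions, products and traces act
  coefficientwise, with weights Tr \<Pi>\<^sub>i.  As \<gamma> is supported on the single block \<Pi>\<^sub>1, each of the
  four divergences reduces to -ln (d\<^sub>G w\<^sub>1), where w\<^sub>1 = exp (-\<beta> \<lambda>\<^sub>1) / Tr exp (-\<beta> H) is the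
  eigenvalue of \<tau>\<^sub>\<beta> on that block.  The upper bound then only uses \<lambda>\<^sub>i \<ge> \<lambda>\<^sub>2 for i \<ge> 2.
*)

lemma rdiag_mult_left: "(rdiag e ** A) $ j $ k = complex_of_real (e j) * A $ j $ k"
  unfolding rdiag_def matrix_matrix_mult_def
  by (simp add: if_distrib if_distribR cong: if_cong)

lemma rdiag_mult_right: "(A ** rdiag e) $ j $ k = A $ j $ k * complex_of_real (e k)"
  unfolding rdiag_def matrix_matrix_mult_def
  by (simp add: if_distrib cong: if_cong)

text \<open>A matrix intertwining two diagonal matrices has its entry \<open>(j, k)\<close> zero unless the
  \<open>j\<close>-th and \<open>k\<close>-th diagonal entries agree, so it intertwines any function of them as well.\<close>
lemma rdiag_intertwining_fun:
  assumes "rdiag e ** W = W ** rdiag d"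
  shows "rdiag (\<lambda>i. f (e i)) ** W = W ** rdiag (\<lambda>i. f (d i))"
proof -
  have "complex_of_real (f (e j)) * W $ j $ k = W $ j $ k * complex_of_real (f (d k))" for j k
  proof -
    have "complex_of_real (e j) * W $ j $ k = W $ j $ k * complex_of_real (d k)"
      using assms by (metis rdiag_mult_left rdiag_mult_right)
    then have "W $ j $ k = 0 \<or> e j = d k" by (auto simp: mult.commute)
    then show ?thesis by auto
  qed
  then show ?thesis by (simp add: vec_eq_iff rdiag_mult_left rdiag_mult_right)
qed

lemma rdiag_comp_eq_sum:
  assumes "finite I" and "\<And>k. g k \<in> I"
  shows "rdiag (\<lambda>k. c (g k)) = (\<Sum>i\<in>I. c i *\<^sub>R rdiag (\<lambda>k. if g k = i then 1 else 0))"
proof -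
  have "(\<Sum>i\<in>I. c i *\<^sub>R complex_of_real (if g r = i then 1 else 0)) = complex_of_real (c (g r))" for r
  proof -
    have "(\<Sum>i\<in>I. c i *\<^sub>R complex_of_real (if g r = i then 1 else 0))
        = (\<Sum>i\<in>I. if g r = i then complex_of_real (c (g r)) else 0)"
      by (rule sum.cong) (auto simp: scaleR_conv_of_real)
    then show ?thesis using assms by simp
  qed
  then show ?thesis
    by (simp add: vec_eq_iff rdiag_def sum_component vector_scaleR_component if_distrib[of "scaleR _"]
        cong: if_cong)
qed

lemma unitary_conj_rdiag_fun_eq:
  assumes U: "unitary U" and V: "unitary V"
    and eq: "U ** rdiag d ** cadj U = V ** rdiag e ** cadj V"
  shows "U ** rdiag (\<lambda>i. f (d i)) ** cadj U = V ** rdiag (\<lambda>i. f (e i)) ** cadj V"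
proof -
  define W where "W = cadj V ** U"
  have UU: "U ** cadj U = mat 1" "cadj U ** U = mat 1" using U unfolding unitary_def by auto
  have VV: "V ** cadj V = mat 1" "cadj V ** V = mat 1" using V unfolding unitary_def by auto
  have "rdiag e ** W = cadj V ** (V ** rdiag e ** cadj V) ** U"
    unfolding W_def by (simp add: matrix_mul_assoc VV)
  also have "\<dots> = W ** rdiag d"
    unfolding eq[symmetric] W_def by (simp add: matrix_mul_assoc[symmetric] UU)
  finally have intertwining: "rdiag (\<lambda>i. f (e i)) ** W = W ** rdiag (\<lambda>i. f (d i))"
    by (rule rdiag_intertwining_fun)
  have "V ** rdiag (\<lambda>i. f (e i)) ** cadj V = V ** (rdiag (\<lambda>i. f (e i)) ** W) ** cadj U"
    unfolding W_def by (simp add: matrix_mul_assoc[symmetric] UU)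
  also have "\<dots> = V ** (W ** rdiag (\<lambda>i. f (d i))) ** cadj U"
    by (simp only: intertwining)
  also have "\<dots> = U ** rdiag (\<lambda>i. f (d i)) ** cadj U"
    unfolding W_def by (simp add: matrix_mul_assoc VV)
  finally show ?thesis by (rule sym)
qed

lemma mfun_unitary_conj_rdiag:
  assumes "unitary U"
  shows "mfun f (U ** rdiag d ** cadj U) = U ** rdiag (\<lambda>i. f (d i)) ** cadj U"
proof -
  have "\<exists>B V e. unitary V \<and> U ** rdiag d ** cadj U = V ** rdiag e ** cadj V
                 \<and> B = V ** rdiag (\<lambda>i. f (e i)) ** cadj V"
    using assms by blast
  from someI_ex[OF this] obtain V e where "unitary V"
    and "U ** rdiag d ** cadj U = V ** rdiag e ** cadj V"
    and "mfun f (U ** rdiag d ** cadj U) = V ** rdiag (\<lambda>i. f (e i)) ** cadj V"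
    unfolding mfun_def by blast
  with assms show ?thesis by (metis unitary_conj_rdiag_fun_eq)
qed

lemma matrix_mult_scaleR_left:
  "(c *\<^sub>R A) ** (B :: complex^'p^'m) = c *\<^sub>R (A ** B)"
  by (simp add: vec_eq_iff matrix_matrix_mult_def scaleR_sum_right)

lemma matrix_mult_scaleR_right:
  "(A :: complex^'m^'k) ** (c *\<^sub>R B) = c *\<^sub>R (A ** B)"
  by (simp add: vec_eq_iff matrix_matrix_mult_def scaleR_sum_right)

lemma matrix_mult_sum_left: "(\<Sum>i\<in>I. A i) ** (B :: 'a::comm_semiring_1^'p^'m) = (\<Sum>i\<in>I. A i ** B)"
  by (induction I rule: infinite_finite_induct)
     (simp_all add: vec_eq_iff matrix_matrix_mult_def sum.distrib distrib_right)

lemma matrix_mult_sum_right: "(B :: 'a::comm_semiring_1^'m^'k) ** (\<Sum>i\<in>I. A i) = (\<Sum>i\<in>I. B ** A i)"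
  by (induction I rule: infinite_finite_induct) (simp_all add: matrix_add_ldistrib)

lemma matrix_vector_mult_sum_left: "(\<Sum>i\<in>I. A i) *v x = (\<Sum>i\<in>I. A i *v (x :: 'a::comm_semiring_1^'n))"
  by (induction I rule: infinite_finite_induct) (simp_all add: matrix_vector_mult_add_rdistrib)

lemma trace_sum: "trace (\<Sum>i\<in>I. A i) = (\<Sum>i\<in>I. trace (A i :: 'a::comm_semiring_1^'n^'n))"
  by (induction I rule: infinite_finite_induct) (simp_all add: trace_add trace_0[unfolded mat_0])

lemma trace_scaleR: "trace (c *\<^sub>R A) = c *\<^sub>R trace (A :: complex^'n^'n)"
  by (simp add: trace_def scaleR_sum_right)

definition cinner :: "complex^'n \<Rightarrow> complex^'n \<Rightarrow> complex" where
  "cinner x y = (\<Sum>k\<in>UNIV. x $ k * cnj (y $ k))"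

lemma cinner_adj: "cinner (A *v x) y = cinner x (cadj A *v y)"
proof -
  have "cinner (A *v x) y = (\<Sum>k\<in>UNIV. \<Sum>l\<in>UNIV. A $ k $ l * x $ l * cnj (y $ k))"
    unfolding cinner_def matrix_vector_mult_def by (simp add: sum_distrib_right)
  also have "\<dots> = (\<Sum>l\<in>UNIV. \<Sum>k\<in>UNIV. A $ k $ l * x $ l * cnj (y $ k))"
    by (rule sum.swap)
  also have "\<dots> = cinner x (cadj A *v y)"
    unfolding cinner_def matrix_vector_mult_def cadj_def
    by (simp add: sum_distrib_left cnj_sum mult_ac)
  finally show ?thesis .
qed

lemma cinner_hermitian: "hermitian A \<Longrightarrow> cinner (A *v x) y = cinner x (A *v y)"
  by (simp add: cinner_adj hermitian_def)

lemma cinner_diff_left: "cinner (x - y) z = cinner x z - cinner y z"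
  by (simp add: cinner_def sum_subtractf left_diff_distrib)

lemma cinner_scale_left: "cinner (c *s x) z = c * cinner x z"
  by (simp add: cinner_def sum_distrib_left mult_ac)

lemma cinner_scale_right: "cinner x (c *s z) = cnj c * cinner x z"
  by (simp add: cinner_def sum_distrib_left mult_ac)

lemma cinner_sum_left: "cinner (\<Sum>i\<in>A. f i) z = (\<Sum>i\<in>A. cinner (f i) z)"
  by (induction A rule: infinite_finite_induct) (simp_all add: cinner_def sum.distrib distrib_right)

lemma cinner_commute: "cinner x y = cnj (cinner y x)"
  by (simp add: cinner_def cnj_sum mult.commute)

lemma cinner_self: "cinner x x = complex_of_real (\<Sum>k\<in>UNIV. (cmod (x $ k))\<^sup>2)"
  unfolding cinner_def of_real_sum by (rule sum.cong) (simp_all add: complex_mult_cnj cmod_power2)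

lemma cinner_self_pos: "x \<noteq> 0 \<Longrightarrow> Re (cinner x x) > 0"
proof -
  assume "x \<noteq> 0"
  then obtain k where "x $ k \<noteq> 0" by (auto simp: vec_eq_iff)
  then have "0 < (cmod (x $ k))\<^sup>2" by simp
  also have "\<dots> \<le> (\<Sum>k\<in>UNIV. (cmod (x $ k))\<^sup>2)" by (rule member_le_sum) auto
  finally show ?thesis unfolding cinner_self by simp
qed

lemma trace_mult_cadj_pos:
  assumes "A \<noteq> (0 :: complex^'n^'n)"
  shows "Re (trace (A ** cadj A)) > 0"
proof -
  have tr: "trace (A ** cadj A) = (\<Sum>j\<in>UNIV. cinner (A $ j) (A $ j))"
    by (simp add: trace_def matrix_matrix_mult_def cadj_def cinner_def)
  obtain j where "A $ j \<noteq> 0" using assms by (auto simp: vec_eq_iff)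
  then have "0 < Re (cinner (A $ j) (A $ j))" by (rule cinner_self_pos)
  also have "\<dots> \<le> (\<Sum>j\<in>UNIV. Re (cinner (A $ j) (A $ j)))"
    by (rule member_le_sum) (auto simp: cinner_self intro: sum_nonneg)
  finally show ?thesis by (simp add: tr)
qed

definition orthonormal_set :: "(complex^'n) set \<Rightarrow> bool" where
  "orthonormal_set S \<longleftrightarrow> finite S \<and> (\<forall>s\<in>S. cinner s s = 1)
     \<and> (\<forall>s\<in>S. \<forall>t\<in>S. s \<noteq> t \<longrightarrow> cinner s t = 0)"

lemma orthonormal_set_insert:
  assumes S: "orthonormal_set S" and "cinner v v = 1" and orth: "\<And>t. t \<in> S \<Longrightarrow> cinner v t = 0"
  shows "v \<notin> S" and "orthonormal_set (insert v S)"
proof -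
  show "v \<notin> S" using assms by force
  have "cinner t v = 0" if "t \<in> S" for t
    using orth[OF that] cinner_commute[of t v] by simp
  then show "orthonormal_set (insert v S)"
    using assms unfolding orthonormal_set_def by blast
qed

text \<open>Witness: the Gram--Schmidt residual of any vector outside the span of \<open>S\<close>.\<close>
lemma orthonormal_set_orthogonal_exists:
  assumes S: "orthonormal_set S" and card: "card S < CARD('n)"
  obtains w :: "complex^'n" where "w \<noteq> 0" and "\<And>t. t \<in> S \<Longrightarrow> cinner w t = 0"
proof -
  have fin: "finite S" using S by (simp add: orthonormal_set_def)
  have "\<not> UNIV \<subseteq> vec.span S"
  proof
    assume "UNIV \<subseteq> vec.span S"
    then have "vec.dim (UNIV :: (complex^'n) set) \<le> card S" using vec.dim_le_card fin by blast
    then show False using card vec_dim_card[where ?'a=complex and ?'n='n] by linarith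
  qed
  then obtain u where u: "u \<notin> vec.span S" by auto
  define w where "w = u - (\<Sum>s\<in>S. cinner u s *s s)"
  have "(\<Sum>s\<in>S. cinner u s *s s) \<in> vec.span S"
    by (intro vec.span_sum vec.span_scale vec.span_base)
  then have "w \<noteq> 0" using u by (auto simp: w_def)
  moreover have "cinner w t = 0" if t: "t \<in> S" for t
  proof -
    have "cinner (\<Sum>s\<in>S. cinner u s *s s) t = (\<Sum>s\<in>S. cinner u s * cinner s t)"
      by (simp add: cinner_sum_left cinner_scale_left)
    also have "\<dots> = (\<Sum>s\<in>S. if s = t then cinner u t else 0)"
      using S t by (intro sum.cong) (auto simp: orthonormal_set_def)
    also have "\<dots> = cinner u t" using t fin by simp
    finally show ?thesis by (simp add: w_def cinner_diff_left)
  qed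
  ultimately show ?thesis by (rule that)
qed

lemma normalise_vector:
  assumes "w \<noteq> 0"
  obtains c where "cinner (c *s w) (c *s w) = 1"
proof
  define r where "r = Re (cinner w w)"
  have "r > 0" using cinner_self_pos[OF assms] by (simp add: r_def)
  moreover have "cinner w w = complex_of_real r" unfolding r_def cinner_self by simp
  ultimately show "cinner (complex_of_real (1 / sqrt r) *s w) (complex_of_real (1 / sqrt r) *s w) = 1"
    by (simp add: cinner_scale_left cinner_scale_right flip: of_real_mult)
qed

lemma unitary_orthonormal_columns:
  assumes "\<And>j k. cinner (e k) (e j) = (if j = k then 1 else 0)"
  shows "unitary (\<chi> r k. e k $ r)"
proof -
  let ?U = "\<chi> r k. e k $ r"
  have "cadj ?U ** ?U = mat 1"
    by (simp add: vec_eq_iff cadj_def matrix_matrix_mult_def mat_def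
          assms[symmetric] cinner_def mult.commute)
  moreover from this have "?U ** cadj ?U = mat 1" by (rule matrix_left_right_inverse[THEN iffD1])
  ultimately show ?thesis by (simp add: unitary_def)
qed

locale resolution_of_identity =
  fixes M :: nat and P :: "nat \<Rightarrow> complex^'n^'n"
  assumes P_hermitian: "\<And>i. i \<in> {1..M} \<Longrightarrow> hermitian (P i)"
    and P_mult: "\<And>i j. i \<in> {1..M} \<Longrightarrow> j \<in> {1..M} \<Longrightarrow> P i ** P j = (if i = j then P i else 0)"
    and sum_P: "(\<Sum>i=1..M. P i) = mat 1"
begin

lemma P_fixed_vector:
  assumes "i \<in> {1..M}" "j \<in> {1..M}" "P j *v v = v"
  shows "P i *v v = (if i = j then v else 0)"
  using P_mult[OF assms(1,2)] matrix_vector_mul_assoc[of "P i" "P j" v] assms(3) by auto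

definition eigen_orthonormal :: "(complex^'n) set \<Rightarrow> bool" where
  "eigen_orthonormal S \<longleftrightarrow> orthonormal_set S \<and> (\<forall>s\<in>S. \<exists>i\<in>{1..M}. P i *v s = s)"

text \<open>Project a vector orthogonal to \<open>S\<close> to the range of some \<open>P i\<close> where it survives;
  since \<open>P i\<close> is Hermitian and each vector of \<open>S\<close> lies in the range of some \<open>P j\<close>, the
  projection stays orthogonal to \<open>S\<close>.\<close>
lemma eigen_orthonormal_extend:
  assumes S: "eigen_orthonormal S" and card: "card S < CARD('n)"
  obtains v where "v \<notin> S" and "eigen_orthonormal (insert v S)"
proof -
  obtain w where "w \<noteq> 0" and w_orth: "\<And>t. t \<in> S \<Longrightarrow> cinner w t = 0"
    using S card orthonormal_set_orthogonal_exists unfolding eigen_orthonormal_def by blast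
  have "\<exists>i\<in>{1..M}. P i *v w \<noteq> 0"
  proof (rule ccontr)
    assume "\<not> ?thesis"
    then have "(\<Sum>i=1..M. P i *v w) = 0" by simp
    moreover have "(\<Sum>i=1..M. P i *v w) = w"
      using sum_P by (simp flip: matrix_vector_mult_sum_left)
    ultimately show False using \<open>w \<noteq> 0\<close> by simp
  qed
  then obtain i where i: "i \<in> {1..M}" and "P i *v w \<noteq> 0" by blast
  then obtain c where v_unit: "cinner (c *s (P i *v w)) (c *s (P i *v w)) = 1"
    using normalise_vector by blast
  define v where "v = c *s (P i *v w)"
  have "P i *v v = v"
    using P_mult[OF i i] by (simp add: v_def vec.scale matrix_vector_mul_assoc)
  moreover have v_orth: "cinner v t = 0" if t: "t \<in> S" for t
  proof -
    obtain j where j: "j \<in> {1..M}" "P j *v t = t" using S t by (auto simp: eigen_orthonormal_def)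
    have "cinner (P i *v w) t = cinner w (P i *v t)" using P_hermitian[OF i] by (rule cinner_hermitian)
    moreover have "cinner w 0 = 0" by (simp add: cinner_def)
    ultimately show ?thesis
      using P_fixed_vector[OF i j] w_orth[OF t] by (simp add: v_def cinner_scale_left)
  qed
  moreover have "orthonormal_set S" using S by (simp add: eigen_orthonormal_def)
  note insert = orthonormal_set_insert[OF this v_unit[folded v_def] v_orth]
  ultimately have "eigen_orthonormal (insert v S)"
    using S i unfolding eigen_orthonormal_def by auto
  with insert(1) show ?thesis by (rule that)
qed

lemma eigen_orthonormal_exists: "m \<le> CARD('n) \<Longrightarrow> \<exists>S. eigen_orthonormal S \<and> card S = m"
proof (induction m)
  case 0
  have "eigen_orthonormal {}" by (simp add: eigen_orthonormal_def orthonormal_set_def)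
  then show ?case by force
next
  case (Suc m)
  then obtain S where S: "eigen_orthonormal S" "card S = m" by auto
  have "card S < CARD('n)" using S Suc.prems by simp
  then obtain v where "v \<notin> S" "eigen_orthonormal (insert v S)"
    by (rule eigen_orthonormal_extend[OF S(1)])
  moreover have "finite S" using S by (simp add: eigen_orthonormal_def orthonormal_set_def)
  ultimately show ?case using S by (metis card_insert_disjoint)
qed

lemma simultaneous_diagonalisation:
  obtains U g where "unitary U" and "\<And>k. g k \<in> {1..M}"
    and "\<And>i. i \<in> {1..M} \<Longrightarrow> P i = U ** rdiag (\<lambda>k. if g k = i then 1 else 0) ** cadj U"
proof -
  obtain S where S: "eigen_orthonormal S" "card S = CARD('n)"
    using eigen_orthonormal_exists by blast
  have "finite S" using S by (simp add: eigen_orthonormal_def orthonormal_set_def)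
  then obtain e where e: "bij_betw e (UNIV :: 'n set) S"
    using finite_same_card_bij[of "UNIV :: 'n set" S] S by auto
  have eS: "e k \<in> S" for k using e by (auto simp: bij_betw_def)
  have "inj e" using e by (rule bij_betw_imp_inj_on)
  have "cinner (e k) (e j) = (if j = k then 1 else 0)" for j k
  proof (cases "j = k")
    case False
    then have "e k \<noteq> e j" using \<open>inj e\<close> by (auto dest: injD)
    then show ?thesis using S eS False by (simp add: eigen_orthonormal_def orthonormal_set_def)
  qed (use S eS in \<open>simp add: eigen_orthonormal_def orthonormal_set_def\<close>)
  then have U: "unitary (\<chi> r k. e k $ r)" (is "unitary ?U") by (rule unitary_orthonormal_columns)
  define g where "g k = (SOME i. i \<in> {1..M} \<and> P i *v e k = e k)" for k
  have g: "g k \<in> {1..M} \<and> P (g k) *v e k = e k" for k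
  proof -
    have "\<exists>i. i \<in> {1..M} \<and> P i *v e k = e k"
      using S eS[of k] unfolding eigen_orthonormal_def by blast
    then show ?thesis unfolding g_def by (rule someI_ex)
  qed
  have diag: "P i = ?U ** rdiag (\<lambda>k. if g k = i then 1 else 0) ** cadj ?U" if i: "i \<in> {1..M}" for i
  proof -
    have column: "P i *v e k = (if g k = i then e k else 0)" for k
      using P_fixed_vector[OF i, of "g k" "e k"] g[of k] by auto
    have "(P i ** ?U) $ r $ k = (P i *v e k) $ r" for r k
      by (simp add: matrix_matrix_mult_def matrix_vector_mult_def)
    then have "P i ** ?U = ?U ** rdiag (\<lambda>k. if g k = i then 1 else 0)"
      using column by (simp add: vec_eq_iff rdiag_mult_right)
    then have "P i ** (?U ** cadj ?U) = ?U ** rdiag (\<lambda>k. if g k = i then 1 else 0) ** cadj ?U"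
      by (simp add: matrix_mul_assoc)
    then show ?thesis using U by (simp add: unitary_def)
  qed
  have g_range: "g k \<in> {1..M}" for k using g by blast
  show ?thesis by (rule that[OF U g_range diag])
qed

definition spectral_comb :: "(nat \<Rightarrow> real) \<Rightarrow> complex^'n^'n" where
  "spectral_comb c = (\<Sum>i=1..M. c i *\<^sub>R P i)"

lemma spectral_comb_mult: "spectral_comb a ** spectral_comb b = spectral_comb (\<lambda>i. a i * b i)"
proof -
  have "spectral_comb a ** spectral_comb b = (\<Sum>j=1..M. \<Sum>i=1..M. (b j * a i) *\<^sub>R (P i ** P j))"
    unfolding spectral_comb_def
    by (simp add: matrix_mult_sum_left matrix_mult_sum_right matrix_mult_scaleR_left
        matrix_mult_scaleR_right scaleR_sum_right)
  also have "\<dots> = (\<Sum>j=1..M. (b j * a j) *\<^sub>R P j)"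
  proof (rule sum.cong)
    fix j assume j: "j \<in> {1..M}"
    then have "(\<Sum>i=1..M. (b j * a i) *\<^sub>R (P i ** P j))
             = (\<Sum>i=1..M. if i = j then (b j * a j) *\<^sub>R P j else 0)"
      by (intro sum.cong) (auto simp: P_mult)
    with j show "(\<Sum>i=1..M. (b j * a i) *\<^sub>R (P i ** P j)) = (b j * a j) *\<^sub>R P j"
      by simp
  qed simp
  finally show ?thesis unfolding spectral_comb_def by (simp add: mult.commute)
qed

lemma spectral_comb_diff: "spectral_comb a - spectral_comb b = spectral_comb (\<lambda>i. a i - b i)"
  unfolding spectral_comb_def by (simp add: sum_subtractf scaleR_diff_left)

lemma scaleR_spectral_comb: "r *\<^sub>R spectral_comb a = spectral_comb (\<lambda>i. r * a i)"
  unfolding spectral_comb_def by (simp add: scaleR_sum_right)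

lemma uminus_spectral_comb: "- spectral_comb a = spectral_comb (\<lambda>i. - a i)"
  unfolding spectral_comb_def by (simp add: sum_negf)

lemma scaleR_P_eq_spectral_comb:
  assumes "i \<in> {1..M}"
  shows "r *\<^sub>R P i = spectral_comb (\<lambda>j. if j = i then r else 0)"
proof -
  have "spectral_comb (\<lambda>j. if j = i then r else 0) = (\<Sum>j=1..M. if j = i then r *\<^sub>R P j else 0)"
    unfolding spectral_comb_def by (rule sum.cong) auto
  with assms show ?thesis by simp
qed

lemma mfun_spectral_comb: "mfun f (spectral_comb c) = spectral_comb (\<lambda>i. f (c i))"
proof -
  obtain U :: "complex^'n^'n" and g :: "'n \<Rightarrow> nat" where U: "unitary U" and g: "\<And>k. g k \<in> {1..M}"
    and diag: "\<And>i. i \<in> {1..M} \<Longrightarrow> P i = U ** rdiag (\<lambda>k. if g k = i then 1 else 0) ** cadj U"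
    using simultaneous_diagonalisation by blast
  have "spectral_comb c = U ** rdiag (\<lambda>k. c (g k)) ** cadj U" for c
  proof -
    have "rdiag (\<lambda>k. c (g k)) = (\<Sum>i=1..M. c i *\<^sub>R rdiag (\<lambda>k. if g k = i then 1 else 0))"
      by (rule rdiag_comp_eq_sum) (use g in auto)
    then show ?thesis
      unfolding spectral_comb_def
      by (simp add: diag matrix_mult_sum_left matrix_mult_sum_right matrix_mult_scaleR_left
          matrix_mult_scaleR_right)
  qed
  then show ?thesis using mfun_unitary_conj_rdiag[OF U] by simp
qed

lemma trace_spectral_comb: "Re (trace (spectral_comb c)) = (\<Sum>i=1..M. c i * Re (trace (P i)))"
  unfolding spectral_comb_def by (simp add: trace_sum trace_scaleR)

lemma trace_spectral_comb_single:
  assumes "i \<in> {1..M}" and "\<And>j. j \<noteq> i \<Longrightarrow> c j = 0"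
  shows "Re (trace (spectral_comb c)) = c i * Re (trace (P i))"
proof -
  have "(\<Sum>j=1..M. c j * Re (trace (P j))) = (\<Sum>j=1..M. if j = i then c i * Re (trace (P i)) else 0)"
    using assms(2) by (intro sum.cong) auto
  with assms(1) show ?thesis by (simp add: trace_spectral_comb)
qed

lemma sum_trace_P: "(\<Sum>i=1..M. Re (trace (P i))) = real CARD('n)"
  using arg_cong[OF sum_P, of "\<lambda>A. Re (trace A)"] by (simp add: trace_sum trace_I)

lemma trace_P_pos:
  assumes "i \<in> {1..M}" and "P i \<noteq> 0"
  shows "Re (trace (P i)) > 0"
  using trace_mult_cadj_pos[OF assms(2)] P_mult[OF assms(1) assms(1)] P_hermitian[OF assms(1)]
  by (simp add: hermitian_def)

end

lemma renyi_log_powr: "(\<alpha>::real) \<noteq> 1 \<Longrightarrow> 1 / (\<alpha> - 1) * ln (K powr (1 - \<alpha>)) = - ln K"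
  by (simp add: ln_powr field_simps)

lemma petz_block_powr:
  assumes "(t::real) > 0" "b > 0"
  shows "(1 / t) powr \<alpha> * b powr (1 - \<alpha>) * t = (t * b) powr (1 - \<alpha>)"
  using assms by (simp add: powr_diff powr_divide powr_mult field_simps)

lemma sandwiched_block_powr:
  assumes "(t::real) > 0" "b > 0" "\<alpha> \<noteq> 0"
  shows "(b powr ((1 - \<alpha>) / (2 * \<alpha>)) * (1 / t) * b powr ((1 - \<alpha>) / (2 * \<alpha>))) powr \<alpha> * t
    = (t * b) powr (1 - \<alpha>)"
proof -
  define s where "s = (1 - \<alpha>) / (2 * \<alpha>)"
  have "s + s = (1 - \<alpha>) / \<alpha>" using assms(3) by (simp add: s_def field_simps)
  then have sandwich: "b powr s * (1 / t) * b powr s = b powr ((1 - \<alpha>) / \<alpha>) / t"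
    by (metis powr_add times_divide_eq_right mult.right_neutral mult.commute mult.assoc)
  have "(b powr s * (1 / t) * b powr s) powr \<alpha> = (b powr ((1 - \<alpha>) / \<alpha>) / t) powr \<alpha>"
    by (simp only: sandwich)
  also have "\<dots> = (b powr ((1 - \<alpha>) / \<alpha>)) powr \<alpha> / t powr \<alpha>" by (rule powr_divide)
  also have "\<dots> = b powr (1 - \<alpha>) / t powr \<alpha>" using assms(3) by (simp add: powr_powr)
  finally show ?thesis
    using assms unfolding s_def by (simp add: powr_diff powr_mult field_simps)
qed

lemma geometric_block_powr:
  assumes "(t::real) > 0" "b > 0"
  shows "b * (b powr (-1/2) * (1 / t) * b powr (-1/2)) powr \<alpha> * t = (t * b) powr (1 - \<alpha>)"
proof -
  have "b powr (-1/2) * (1 / t) * b powr (-1/2) = b powr (-1/2 + -1/2) / t"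
    unfolding powr_add by simp
  then have sandwich: "b powr (-1/2) * (1 / t) * b powr (-1/2) = b powr (-1) / t"
    by simp
  have "(b powr (-1/2) * (1 / t) * b powr (-1/2)) powr \<alpha> = (b powr (-1) / t) powr \<alpha>"
    by (simp only: sandwich)
  also have "\<dots> = (b powr (-1)) powr \<alpha> / t powr \<alpha>" by (rule powr_divide)
  also have "\<dots> = b powr (- \<alpha>) / t powr \<alpha>" unfolding powr_powr by simp
  finally show ?thesis using assms by (simp add: powr_diff powr_mult powr_minus field_simps)
qed

context resolution_of_identity
begin

text \<open>The state \<open>P i / Tr P i\<close> commutes with every \<open>spectral_comb b\<close> and lives on a single
  block, so each divergence from \<open>spectral_comb b\<close> only sees the weight \<open>b i\<close>.\<close>
context
  fixes i :: nat and b :: "nat \<Rightarrow> real"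
  assumes i: "i \<in> {1..M}" and P_i: "P i \<noteq> 0" and b_i: "b i > 0"
begin

lemma block_state_eq:
  "(1 / Re (trace (P i))) *\<^sub>R P i = spectral_comb (\<lambda>j. if j = i then 1 / Re (trace (P i)) else 0)"
  using i by (rule scaleR_P_eq_spectral_comb)

lemma rel_ent_block_state:
  "rel_ent ((1 / Re (trace (P i))) *\<^sub>R P i) (spectral_comb b) = - ln (Re (trace (P i)) * b i)"
proof -
  define t where "t = Re (trace (P i))"
  have t: "t > 0" unfolding t_def using i P_i by (rule trace_P_pos)
  let ?lg = "\<lambda>x::real. if x > 0 then ln x else 0"
  have "rel_ent ((1 / t) *\<^sub>R P i) (spectral_comb b)
      = Re (trace (spectral_comb (\<lambda>j. (if j = i then 1 / t else 0)
                  * (?lg (if j = i then 1 / t else 0) - ?lg (b j)))))"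
    unfolding rel_ent_def mln_def t_def block_state_eq mfun_spectral_comb spectral_comb_diff
      spectral_comb_mult ..
  also have "\<dots> = 1 / t * (ln (1 / t) - ln (b i)) * t"
    using i t b_i by (subst trace_spectral_comb_single) (auto simp: t_def)
  also have "\<dots> = - ln (t * b i)"
    using t b_i by (simp add: ln_div ln_mult)
  finally show ?thesis unfolding t_def .
qed

lemma petz_renyi_block_state:
  assumes "\<alpha> \<noteq> 1"
  shows "petz_renyi \<alpha> ((1 / Re (trace (P i))) *\<^sub>R P i) (spectral_comb b) = - ln (Re (trace (P i)) * b i)"
proof -
  define t where "t = Re (trace (P i))"
  have t: "t > 0" unfolding t_def using i P_i by (rule trace_P_pos)
  have "Re (trace (mpow ((1 / t) *\<^sub>R P i) \<alpha> ** mpow (spectral_comb b) (1 - \<alpha>)))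
      = Re (trace (spectral_comb (\<lambda>j. (if j = i then 1 / t else 0) powr \<alpha> * b j powr (1 - \<alpha>))))"
    unfolding mpow_def t_def block_state_eq mfun_spectral_comb spectral_comb_mult ..
  also have "\<dots> = (1 / t) powr \<alpha> * b i powr (1 - \<alpha>) * t"
    using i by (subst trace_spectral_comb_single) (auto simp: t_def)
  also have "\<dots> = (t * b i) powr (1 - \<alpha>)"
    using t b_i by (rule petz_block_powr)
  finally show ?thesis
    unfolding petz_renyi_def t_def[symmetric] using renyi_log_powr[OF assms] by simp
qed

lemma sandwiched_renyi_block_state:
  assumes "\<alpha> \<noteq> 0" "\<alpha> \<noteq> 1"
  shows "sandwiched_renyi \<alpha> ((1 / Re (trace (P i))) *\<^sub>R P i) (spectral_comb b)
    = - ln (Re (trace (P i)) * b i)"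
proof -
  define t where "t = Re (trace (P i))"
  define s where "s = (1 - \<alpha>) / (2 * \<alpha>)"
  have t: "t > 0" unfolding t_def using i P_i by (rule trace_P_pos)
  have "Re (trace (mpow (mpow (spectral_comb b) s ** ((1 / t) *\<^sub>R P i) ** mpow (spectral_comb b) s) \<alpha>))
      = Re (trace (spectral_comb (\<lambda>j. (b j powr s * (if j = i then 1 / t else 0) * b j powr s) powr \<alpha>)))"
    unfolding mpow_def t_def block_state_eq mfun_spectral_comb spectral_comb_mult ..
  also have "\<dots> = (b i powr s * (1 / t) * b i powr s) powr \<alpha> * t"
    using i by (subst trace_spectral_comb_single) (auto simp: t_def)
  also have "\<dots> = (t * b i) powr (1 - \<alpha>)"
    unfolding s_def using t b_i assms(1) by (rule sandwiched_block_powr)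
  finally show ?thesis
    unfolding sandwiched_renyi_def t_def[symmetric] s_def[symmetric] using renyi_log_powr[OF assms(2)]
    by simp
qed

lemma geometric_renyi_block_state:
  assumes "\<alpha> \<noteq> 1"
  shows "geometric_renyi \<alpha> ((1 / Re (trace (P i))) *\<^sub>R P i) (spectral_comb b)
    = - ln (Re (trace (P i)) * b i)"
proof -
  define t where "t = Re (trace (P i))"
  have t: "t > 0" unfolding t_def using i P_i by (rule trace_P_pos)
  have "Re (trace (spectral_comb b ** mpow (mpow (spectral_comb b) (-1/2) ** ((1 / t) *\<^sub>R P i)
          ** mpow (spectral_comb b) (-1/2)) \<alpha>))
      = Re (trace (spectral_comb
          (\<lambda>j. b j * (b j powr (-1/2) * (if j = i then 1 / t else 0) * b j powr (-1/2)) powr \<alpha>)))"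
    unfolding mpow_def t_def block_state_eq mfun_spectral_comb spectral_comb_mult ..
  also have "\<dots> = b i * (b i powr (-1/2) * (1 / t) * b i powr (-1/2)) powr \<alpha> * t"
    using i by (subst trace_spectral_comb_single) (auto simp: t_def)
  also have "\<dots> = (t * b i) powr (1 - \<alpha>)"
    using t b_i by (rule geometric_block_powr)
  finally show ?thesis
    unfolding geometric_renyi_def t_def[symmetric] using renyi_log_powr[OF assms] by simp
qed

end

lemma gibbs_state_spectral_comb:
  "(1 / Re (trace (mexp (- (\<beta> *\<^sub>R spectral_comb c))))) *\<^sub>R mexp (- (\<beta> *\<^sub>R spectral_comb c))
    = spectral_comb (\<lambda>i. exp (- \<beta> * c i) / (\<Sum>j=1..M. exp (- \<beta> * c j) * Re (trace (P j))))"
proof -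
  have "mexp (- (\<beta> *\<^sub>R spectral_comb c)) = spectral_comb (\<lambda>i. exp (- \<beta> * c i))"
    unfolding mexp_def scaleR_spectral_comb uminus_spectral_comb mfun_spectral_comb by simp
  then show ?thesis by (simp add: trace_spectral_comb scaleR_spectral_comb)
qed

end

lemma neg_ln_gibbs_ground_weight:
  fixes t lam :: "nat \<Rightarrow> real"
  assumes "1 \<le> M" and "t 1 > 0" and "\<And>i. i \<in> {2..M} \<Longrightarrow> t i \<ge> 0"
  shows "- ln (t 1 * (exp (- \<beta> * lam 1) / (\<Sum>i=1..M. exp (- \<beta> * lam i) * t i)))
    = ln (1 + (\<Sum>i=2..M. exp (- \<beta> * (lam i - lam 1)) * t i) / t 1)"
proof -
  define S where "S = (\<Sum>i=2..M. exp (- \<beta> * (lam i - lam 1)) * t i)"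
  have "S \<ge> 0" unfolding S_def using assms(3) by (intro sum_nonneg) auto
  have "(\<Sum>i=1..M. exp (- \<beta> * lam i) * t i) = exp (- \<beta> * lam 1) * (t 1 + S)"
    unfolding S_def using assms(1)
    by (simp add: sum.atLeast_Suc_atMost numeral_2_eq_2 sum_distrib_left distrib_left
        mult.assoc[symmetric] algebra_simps flip: exp_add)
  then have "t 1 * (exp (- \<beta> * lam 1) / (\<Sum>i=1..M. exp (- \<beta> * lam i) * t i)) = t 1 / (t 1 + S)"
    by simp
  also have "\<dots> = 1 / (1 + S / t 1)"
    using assms(2) \<open>S \<ge> 0\<close> by (simp add: field_simps)
  finally show ?thesis
    unfolding S_def[symmetric] using assms(2) \<open>S \<ge> 0\<close> by (simp add: ln_div add_pos_nonneg)
qed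

lemma ln_gibbs_tail_le:
  fixes t lam :: "nat \<Rightarrow> real"
  assumes "\<beta> \<ge> 0" and "1 \<le> M" and "(\<Sum>i=1..M. t i) = d" and "t 1 > 0"
    and "\<And>i. i \<in> {2..M} \<Longrightarrow> lam 2 \<le> lam i \<and> 0 \<le> t i"
  shows "ln (1 + (\<Sum>i=2..M. exp (- \<beta> * (lam i - lam 1)) * t i) / t 1)
    \<le> ln (1 + exp (- \<beta> * (lam 2 - lam 1)) * ((d - t 1) / t 1))"
proof -
  have "(\<Sum>i=2..M. exp (- \<beta> * (lam i - lam 1)) * t i) \<le> (\<Sum>i=2..M. exp (- \<beta> * (lam 2 - lam 1)) * t i)"
  proof (rule sum_mono)
    fix i assume "i \<in> {2..M}"
    with assms have "- \<beta> * (lam i - lam 1) \<le> - \<beta> * (lam 2 - lam 1)" and "0 \<le> t i"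
      by (auto intro: mult_left_mono)
    then show "exp (- \<beta> * (lam i - lam 1)) * t i \<le> exp (- \<beta> * (lam 2 - lam 1)) * t i"
      by (intro mult_right_mono) auto
  qed
  also have "\<dots> = exp (- \<beta> * (lam 2 - lam 1)) * (d - t 1)"
    using assms(2,3) by (simp add: sum_distrib_left sum.atLeast_Suc_atMost numeral_2_eq_2 flip: assms(3))
  finally have "(\<Sum>i=2..M. exp (- \<beta> * (lam i - lam 1)) * t i) / t 1
      \<le> exp (- \<beta> * (lam 2 - lam 1)) * ((d - t 1) / t 1)"
    using assms(4) by (simp add: divide_right_mono)
  moreover have "0 \<le> (\<Sum>i=2..M. exp (- \<beta> * (lam i - lam 1)) * t i) / t 1"
    using assms(4,5) by (intro divide_nonneg_pos sum_nonneg) auto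
  ultimately show ?thesis by (intro ln_mono) auto
qed

theorem proposition3:
  fixes H :: "complex^'n^'n" and M :: nat and lam :: "nat \<Rightarrow> real"
    and P :: "nat \<Rightarrow> complex^'n^'n" and \<beta> :: real
  assumes "hermitian H" and "M \<ge> 2"
    and "\<And>i j. 1 \<le> i \<Longrightarrow> i < j \<Longrightarrow> j \<le> M \<Longrightarrow> lam i < lam j"
    and "\<And>i. 1 \<le> i \<Longrightarrow> i \<le> M \<Longrightarrow> hermitian (P i) \<and> P i \<noteq> 0"
    and "\<And>i j. 1 \<le> i \<Longrightarrow> i \<le> M \<Longrightarrow> 1 \<le> j \<Longrightarrow> j \<le> M \<Longrightarrow>
           P i ** P j = (if i = j then P i else 0)"
    and "(\<Sum>i=1..M. P i) = mat 1"
    and "H = (\<Sum>i=1..M. lam i *\<^sub>R P i)"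
    and "\<beta> \<ge> 0"
  shows
    "let \<Delta> = lam 2 - lam 1; d = real CARD('n); dG = Re (trace (P 1));
         \<gamma> = (1 / dG) *\<^sub>R P 1;
         \<tau> = (1 / Re (trace (mexp (- (\<beta> *\<^sub>R H))))) *\<^sub>R mexp (- (\<beta> *\<^sub>R H))
     in rel_ent \<gamma> \<tau> = ln (1 + (\<Sum>i=2..M. exp (- \<beta> * (lam i - lam 1)) * Re (trace (P i))) / dG)
      \<and> ln (1 + (\<Sum>i=2..M. exp (- \<beta> * (lam i - lam 1)) * Re (trace (P i))) / dG)
          \<le> ln (1 + exp (- \<beta> * \<Delta>) * ((d - dG) / dG))
      \<and> (\<forall>\<alpha>. 0 < \<alpha> \<and> \<alpha> \<noteq> 1 \<longrightarrow>
            rel_ent \<gamma> \<tau> = petz_renyi \<alpha> \<gamma> \<tau>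
          \<and> rel_ent \<gamma> \<tau> = sandwiched_renyi \<alpha> \<gamma> \<tau>
          \<and> rel_ent \<gamma> \<tau> = geometric_renyi \<alpha> \<gamma> \<tau>)"
proof -
  interpret resolution_of_identity M P
    by unfold_locales (use assms(4-6) in auto)
  have ground: "1 \<in> {1..M}" "P 1 \<noteq> 0" using assms(2,4) by auto
  have trace_pos: "Re (trace (P i)) > 0" if "i \<in> {1..M}" for i
    using that assms(4) by (auto intro: trace_P_pos)
  define Z where "Z = (\<Sum>i=1..M. exp (- \<beta> * lam i) * Re (trace (P i)))"
  define w where "w i = exp (- \<beta> * lam i) / Z" for i
  have "H = spectral_comb lam" unfolding spectral_comb_def by (rule assms(7))
  then have gibbs: "(1 / Re (trace (mexp (- (\<beta> *\<^sub>R H))))) *\<^sub>R mexp (- (\<beta> *\<^sub>R H)) = spectral_comb w"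
    unfolding w_def Z_def by (simp only: gibbs_state_spectral_comb)
  have "w 1 > 0" unfolding w_def Z_def using assms(2) trace_pos
    by (intro divide_pos_pos sum_pos) auto
  have "- ln (Re (trace (P 1)) * w 1)
      = ln (1 + (\<Sum>i=2..M. exp (- \<beta> * (lam i - lam 1)) * Re (trace (P i))) / Re (trace (P 1)))"
    unfolding w_def Z_def using assms(2) trace_pos
    by (intro neg_ln_gibbs_ground_weight[where t="\<lambda>i. Re (trace (P i))"]) (auto intro: less_imp_le)
  moreover have "ln (1 + (\<Sum>i=2..M. exp (- \<beta> * (lam i - lam 1)) * Re (trace (P i))) / Re (trace (P 1)))
      \<le> ln (1 + exp (- \<beta> * (lam 2 - lam 1)) * ((real CARD('n) - Re (trace (P 1))) / Re (trace (P 1))))"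
    using assms(2,3,8) sum_trace_P trace_pos
    by (intro ln_gibbs_tail_le[where t="\<lambda>i. Re (trace (P i))"]) (auto intro: less_imp_le simp: le_less)
  ultimately show ?thesis
    unfolding Let_def gibbs
    using rel_ent_block_state[where i=1 and b=w, OF ground \<open>w 1 > 0\<close>]
      petz_renyi_block_state[where i=1 and b=w, OF ground \<open>w 1 > 0\<close>]
      sandwiched_renyi_block_state[where i=1 and b=w, OF ground \<open>w 1 > 0\<close>]
      geometric_renyi_block_state[where i=1 and b=w, OF ground \<open>w 1 > 0\<close>]
    by simp
qed

end
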